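(* Let $S_3\nearrow S_4\nearrow\cdots\nearrow S_n$ (with $S_k\subseteq\mathbf D^k$) be a sequence of expansions such that, for every $k=3,\dots,n$, $S_k$ is good, has no bad components, and satisfies $I(S_k)=-2$ and $c(S_k)=2$. Then there is no expansion $S_n\nearrow S_{n+1}\subseteq\mathbf D^{n+1}$ by an isolated $(-3)$-vector.
   Context: $\mathbf D^n$ denotes $\mathbb Z^n$ with basis $e_1,\dots,e_n$ and symmetric bilinear form $e_i\cdot e_j=-\delta_{ij}$. Let $S=\{v_1,\dots,v_n\}\subseteq\mathbf D^n$ be an indexed set of $n$ vectors, and put $E^S_i=\{j: v_j\cdot e_i\ne0\}$. - $S$ satisfies condition (C) if, for all $i,j$: $v_i\cdot v_i=-a_i\le-2$; $v_i\cdot v_j\in\{0,1\}$ when $|i-j|=1$; and $v_i\cdot v_j=0$ when $|i-j|>1$. - The intersection graph of $S$ has vertices $v_1,\dots,v_n$, with an edge between $v_i$ and $v_j$ iff $v_i\cdot v_j=1$. The number $c(S)$ is the number of its connected components. - An element $v_j$ is isolated, final or internal if $\sum_{i\ne j}v_i\cdot v_j$ equals $0$, $1$ or $2$ respectively. - Two vectors $v,w$ are linked if there is $e\in\mathbf D^n$ with $e\cdot e=-1$, $v\cdot e\ne0$ and $w\cdot e\ne0$. - $S$ is irreducible if any two of its elements are joined by a finite chain of elements of $S$ in which consecutive elements are linked. - $S$ is good if it is irreducible and satisfies (C). - $I(S)=\sum_{i=1}^n(-v_i\cdot v_i-3)$. Contraction and expansion. For $e\cdot e=-1$ let $\pi_e(v)=v+(v\cdot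 e)e$. Suppose $S$ satisfies (C), $|v_i\cdot e_j|\le1$ for all $i,j$, and there are indices $h,s,t$ with $E^S_h=\{s,t\}$ and $a_t>2$. Then $$S'=(S\setminus\{v_s,v_t\})\cup\{\pi_{e_h}(v_t)\}\subseteq\langle e_j: j\ne h\rangle\cong\mathbf D^{n-1}$$ is obtained from $S$ by a contraction, written $S\searrow S'$; conversely $S'\nearrow S$ is an expansion. The expansion is said to be by the vector $v_s$. It is an expansion by an isolated (resp. final) $(-a)$-vector if $v_s$ is isolated (resp. final) in $S$ and $v_s\cdot v_s=-a$. Bad components. Let $S'=\{v_1,\dots,v_n\}\subseteq\mathbf D^n$, $n\ge3$, be good, and suppose some $C'=\{v_{s-1},v_s,v_{s+1}\}$ with $1<s<n$ satisfies all of the following: - $C'$ is a connected component of the intersection graph of $S'$; - $v_{s\pm1}\cdot v_{s\pm1}=-2$ and $v_s\cdot v_s<-2$; - $E^{S'}_j=\{s-1,s,s+1\}$ for some $j$. If $S\subseteq\mathbf D^m$ is obtained from $S'$ by a sequence of expansions by final $(-2)$-vectors attached to $C'$, with $c(S)=c(S')$, then the connected component of $S$ corresponding to $C'$ is a bad component of $S$. The number of bad components of $S$ is denoted $b(S)$. *)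

theory Defs
  imports Main
begin

text \<open>Vectors of D^n are integer lists of length n (coordinates w.r.t. e_1..e_n, 0-based);
  an indexed set S = {v_1,...,v_n} is a list of vectors (0-based indices).\<close>

definition dot :: "int list \<Rightarrow> int list \<Rightarrow> int" where
  "dot v w = - (\<Sum>i<length v. v ! i * w ! i)"

definition inD :: "nat \<Rightarrow> int list list \<Rightarrow> bool" where
  "inD n S \<longleftrightarrow> length S = n \<and> (\<forall>v\<in>set S. length v = n)"

definition unitv :: "nat \<Rightarrow> nat \<Rightarrow> int list" where
  "unitv n h = map (\<lambda>j. if j = h then 1 else 0) [0..<n]"

definition proj :: "int list \<Rightarrow> int list \<Rightarrow> int list" where
  "proj e v = map2 (\<lambda>a b. a + dot v e * b) v e"

definition del_nth :: "nat \<Rightarrow> 'a list \<Rightarrow> 'a list" where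
  "del_nth k xs = take k xs @ drop (Suc k) xs"

definition Eset :: "int list list \<Rightarrow> nat \<Rightarrow> nat set" where
  "Eset S i = {j. j < length S \<and> dot (S ! j) (unitv (length (S ! j)) i) \<noteq> 0}"

definition condC :: "int list list \<Rightarrow> bool" where
  "condC S \<longleftrightarrow>
     (\<forall>i<length S. dot (S ! i) (S ! i) \<le> -2) \<and>
     (\<forall>i<length S. \<forall>j<length S. (i + 1 = j \<or> j + 1 = i) \<longrightarrow> dot (S ! i) (S ! j) \<in> {0, 1}) \<and>
     (\<forall>i<length S. \<forall>j<length S. (i + 1 < j \<or> j + 1 < i) \<longrightarrow> dot (S ! i) (S ! j) = 0)"

definition adj :: "int list list \<Rightarrow> nat \<Rightarrow> nat \<Rightarrow> bool" where
  "adj S i j \<longleftrightarrow> i < length S \<and> j < length S \<and> i \<noteq> j \<and> dot (S ! i) (S ! j) = 1"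

definition comp :: "int list list \<Rightarrow> nat \<Rightarrow> nat set" where
  "comp S i = {j. j < length S \<and> (adj S)\<^sup>*\<^sup>* i j}"

definition components :: "int list list \<Rightarrow> nat set set" where
  "components S = comp S ` {..<length S}"

definition ncomp :: "int list list \<Rightarrow> nat" where
  "ncomp S = card (components S)"

definition degree :: "int list list \<Rightarrow> nat \<Rightarrow> int" where
  "degree S j = (\<Sum>i\<in>{..<length S} - {j}. dot (S ! i) (S ! j))"

definition isolated :: "int list list \<Rightarrow> nat \<Rightarrow> bool" where
  "isolated S j \<longleftrightarrow> degree S j = 0"

definition final :: "int list list \<Rightarrow> nat \<Rightarrow> bool" where
  "final S j \<longleftrightarrow> degree S j = 1"

definition linked :: "int list \<Rightarrow> int list \<Rightarrow> bool" where
  "linked v w \<longleftrightarrow> (\<exists>e. length e = length v \<and> dot e e = -1 \<and> dot v e \<noteq> 0 \<and> dot w e \<noteq> 0)"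

definition irreducible_set :: "int list list \<Rightarrow> bool" where
  "irreducible_set S \<longleftrightarrow>
     (\<forall>i<length S. \<forall>j<length S.
        (\<lambda>a b. a < length S \<and> b < length S \<and> linked (S ! a) (S ! b))\<^sup>*\<^sup>* i j)"

definition good :: "int list list \<Rightarrow> bool" where
  "good S \<longleftrightarrow> inD (length S) S \<and> irreducible_set S \<and> condC S"

definition Iinv :: "int list list \<Rightarrow> int" where
  "Iinv S = (\<Sum>i<length S. - dot (S ! i) (S ! i) - 3)"

text \<open>S contracts to S' (S in D^n, S' in D^(n-1)), the removed vector being v_s
  (so S' \<nearrow> S is an expansion by v_s). Vectors and coordinates are renumbered
  order-preservingly; pi_{e_h}(v_t) takes the place of v_t.\<close>
definition contraction_by :: "int list list \<Rightarrow> int list list \<Rightarrow> nat \<Rightarrow> bool" where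
  "contraction_by S S' s \<longleftrightarrow>
     (let n = length S in
       inD n S \<and> condC S \<and> (\<forall>v\<in>set S. \<forall>x\<in>set v. \<bar>x\<bar> \<le> 1) \<and>
       (\<exists>h t. h < n \<and> s < n \<and> t < n \<and> s \<noteq> t \<and> Eset S h = {s, t} \<and>
              - dot (S ! t) (S ! t) > 2 \<and>
              S' = del_nth s (map (del_nth h) (S[t := proj (unitv n h) (S ! t)]))))"

definition contraction :: "int list list \<Rightarrow> int list list \<Rightarrow> bool" where
  "contraction S S' \<longleftrightarrow> (\<exists>s. contraction_by S S' s)"

definition expansion :: "int list list \<Rightarrow> int list list \<Rightarrow> bool" where
  "expansion S' S \<longleftrightarrow> contraction S S'"

definition expansion_isolated :: "int \<Rightarrow> int list list \<Rightarrow> int list list \<Rightarrow> bool" where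
  "expansion_isolated a S' S \<longleftrightarrow>
     (\<exists>s. contraction_by S S' s \<and> isolated S s \<and> dot (S ! s) (S ! s) = - a)"

text \<open>Bad components. badchain S0 C0 S C: S is obtained from S0 by a sequence of expansions
  by final (-2)-vectors each attached to the component tracked from C0; C is the set of indices
  in S corresponding to C0 together with the added vectors.\<close>
definition shift :: "nat \<Rightarrow> nat \<Rightarrow> nat" where
  "shift s i = (if i < s then i else Suc i)"

inductive badchain :: "int list list \<Rightarrow> nat set \<Rightarrow> int list list \<Rightarrow> nat set \<Rightarrow> bool" where
  base: "badchain S0 C0 S0 C0"
| step: "badchain S0 C0 S1 C1 \<Longrightarrow> contraction_by S2 S1 s \<Longrightarrow> final S2 s \<Longrightarrow>
         dot (S2 ! s) (S2 ! s) = -2 \<Longrightarrow> (\<exists>i\<in>C1. adj S2 s (shift s i)) \<Longrightarrow>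
         badchain S0 C0 S2 (insert s (shift s ` C1))"

definition bad_component :: "int list list \<Rightarrow> nat set \<Rightarrow> bool" where
  "bad_component S K \<longleftrightarrow>
     (\<exists>S0 s C. 3 \<le> length S0 \<and> good S0 \<and> 0 < s \<and> Suc s < length S0 \<and>
        comp S0 s = {s - 1, s, Suc s} \<and>
        dot (S0 ! (s - 1)) (S0 ! (s - 1)) = -2 \<and> dot (S0 ! Suc s) (S0 ! Suc s) = -2 \<and>
        dot (S0 ! s) (S0 ! s) < -2 \<and>
        (\<exists>j<length S0. Eset S0 j = {s - 1, s, Suc s}) \<and>
        badchain S0 {s - 1, s, Suc s} S C \<and> ncomp S = ncomp S0 \<and>
        (\<exists>i\<in>C. K = comp S i))"

definition nbad :: "int list list \<Rightarrow> nat" where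
  "nbad S = card {K. bad_component S K}"

end

theory Submission
  imports Defs
begin

text \<open>
  Write a configuration S = {v_1, ..., v_n} in D^n as the n x n integer matrix
  with rows v_j and consider the inner products of its columns.  Call S column-admissible if
  every column has squared length at least 2 and any two distinct columns have inner
  product in {-1, 0, 1}.  The development establishes:
  \<^item> index bookkeeping for contractions, and a coordinate description of a contraction
    (locale contraction_layout);
  \<^item> column-admissibility lifts along every expansion that preserves I: the contracted
    column has squared length 2, and equal I forces the removed vector to be
    \<plusminus>e_h \<plusminus>e_c, which perturbs the remaining column products by at most one term;
  \<^item> no expansion by an isolated (-3)-vector exists over a column-admissible configuration:
    orthogonality of v_s = \<plusminus>e_h \<plusminus>e_a \<plusminus>e_b to the other rows makes two columns of S'
    proportional, contradicting admissibility;
  \<^item> every S in D^3 satisfying (C) with I(S) = -2 is column-admissible (a finite analysis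
    of 3 x 3 matrices with entries in {-1, 0, 1}).
  The theorem follows by induction along the chain S_3 \<nearrow> ... \<nearrow> S_n.  Only (C), the
  value of I and the expansions are needed.
\<close>

text \<open>The map shift s : {0..m-1} -> {0..m} - {s} re-inserts a deleted index s;
  it is how indices of S' are located in S.\<close>
lemma shift_inj: "inj (shift s)"
  unfolding inj_def shift_def by auto

lemma shift_lt: "s \<le> m \<Longrightarrow> j < m \<Longrightarrow> shift s j < Suc m"
  by (auto simp: shift_def)

lemma shift_ne: "shift s j \<noteq> s"
  by (auto simp: shift_def)

lemma shift_image: "s \<le> m \<Longrightarrow> shift s ` {..<m} = {..<Suc m} - {s}"
proof (intro equalityI subsetI)
  fix x assume "s \<le> m" "x \<in> {..<Suc m} - {s}"
  then show "x \<in> shift s ` {..<m}"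
    by (cases "x < s") (auto simp: shift_def image_iff intro: bexI[of _ "x - 1"])
qed (auto simp: shift_def)

lemma shift_cases:
  assumes "C < Suc m" "C \<noteq> h" "h \<le> m"
  obtains c where "c < m" "C = shift h c"
  using assms shift_image[OF assms(3)] by (metis Diff_iff imageE lessThan_iff singletonD)

lemma sum_shift:
  fixes f :: "nat \<Rightarrow> int"
  assumes "s \<le> m"
  shows "(\<Sum>j<Suc m. f j) = f s + (\<Sum>j<m. f (shift s j))"
proof -
  have "(\<Sum>j<Suc m. f j) = f s + sum f ({..<Suc m} - {s})"
    using assms by (intro sum.remove) auto
  also have "sum f ({..<Suc m} - {s}) = (\<Sum>j<m. f (shift s j))"
    unfolding shift_image[OF assms, symmetric]
    by (subst sum.reindex) (auto intro: inj_on_subset[OF shift_inj])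
  finally show ?thesis .
qed

lemma del_nth_length: "k < length xs \<Longrightarrow> length (del_nth k xs) = length xs - 1"
  by (simp add: del_nth_def)

lemma del_nth_nth: "k < length xs \<Longrightarrow> i < length xs - 1 \<Longrightarrow> del_nth k xs ! i = xs ! shift k i"
  by (simp add: del_nth_def shift_def nth_append)

lemma unitv_dot: "h < length v \<Longrightarrow> dot v (unitv (length v) h) = - (v ! h)"
proof -
  assume h: "h < length v"
  have "dot v (unitv (length v) h) = - (\<Sum>i<length v. if i = h then v ! i else 0)"
    unfolding dot_def unitv_def by (intro arg_cong[where f=uminus] sum.cong) auto
  also have "\<dots> = - v ! h" using h by (simp add: sum.delta)
  finally show ?thesis .
qed

lemma proj_length: "length v = n \<Longrightarrow> length (proj (unitv n h) v) = n"
  by (simp add: proj_def unitv_def)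

lemma proj_nth: "length v = n \<Longrightarrow> i < n \<Longrightarrow> i \<noteq> h \<Longrightarrow> proj (unitv n h) v ! i = v ! i"
  by (simp add: proj_def unitv_def)

abbreviation contracted :: "int list list \<Rightarrow> nat \<Rightarrow> nat \<Rightarrow> nat \<Rightarrow> int list list" where
  "contracted S s t h \<equiv> del_nth s (map (del_nth h) (S[t := proj (unitv (length S) h) (S ! t)]))"

lemma contracted_shape:
  assumes "length S = Suc m" "\<And>j. j < Suc m \<Longrightarrow> length (S ! j) = Suc m"
    and "h \<le> m" "s \<le> m" "t \<le> m"
  shows "length (contracted S s t h) = m"
    and "j < m \<Longrightarrow> length (contracted S s t h ! j) = m"
    and "j < m \<Longrightarrow> c < m \<Longrightarrow> contracted S s t h ! j ! c = S ! shift s j ! shift h c"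
proof -
  define T where "T = S[t := proj (unitv (Suc m) h) (S ! t)]"
  have T_row: "T ! r = (if r = t then proj (unitv (Suc m) h) (S ! t) else S ! r)" if "r < Suc m" for r
    using that assms(1) by (simp add: T_def)
  have len_T: "length T = Suc m" "\<And>r. r < Suc m \<Longrightarrow> length (T ! r) = Suc m"
    using assms by (auto simp: T_row proj_length) (simp add: T_def)
  have C: "contracted S s t h = del_nth s (map (del_nth h) T)"
    using assms(1) by (simp add: T_def)
  show "length (contracted S s t h) = m"
    using len_T assms(4) by (simp add: C del_nth_length)
  assume j: "j < m"
  have row: "contracted S s t h ! j = del_nth h (T ! shift s j)"
    using j len_T assms(4) by (simp add: C del_nth_nth shift_lt)
  show "length (contracted S s t h ! j) = m"
    using j len_T assms(3,4) by (simp add: row del_nth_length shift_lt)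
  assume c: "c < m"
  have "contracted S s t h ! j ! c = T ! shift s j ! shift h c"
    using j c len_T assms(3,4) by (simp add: row del_nth_nth shift_lt)
  also have "\<dots> = S ! shift s j ! shift h c"
    using j c assms by (simp add: T_row shift_lt shift_ne proj_nth)
  finally show "contracted S s t h ! j ! c = S ! shift s j ! shift h c" .
qed

lemma dot_sym: "length v = length w \<Longrightarrow> dot v w = dot w v"
  by (simp add: dot_def mult.commute)

lemma neg_dot_self: "- dot v v = (\<Sum>i<length v. v ! i * v ! i)"
  by (simp add: dot_def)

lemma condC_dot_01:
  assumes "condC S" "i < length S" "j < length S" "i \<noteq> j"
  shows "dot (S ! i) (S ! j) \<in> {0, 1}"
proof (cases "i + 1 = j \<or> j + 1 = i")
  case True then show ?thesis using assms unfolding condC_def by blast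
next
  case False
  then have "i + 1 < j \<or> j + 1 < i" using assms(4) by arith
  then have "dot (S ! i) (S ! j) = 0" using assms(1-3) unfolding condC_def by blast
  then show ?thesis by simp
qed

text \<open>An isolated vector is orthogonal to all the others, since under (C) all the
  products in its degree are nonnegative.\<close>
lemma isolated_orthogonal:
  assumes "condC S" "isolated S s" "s < length S" "r < length S" "r \<noteq> s"
  shows "dot (S ! r) (S ! s) = 0"
proof -
  have nonneg: "\<forall>i\<in>{..<length S} - {s}. 0 \<le> dot (S ! i) (S ! s)"
  proof
    fix i assume "i \<in> {..<length S} - {s}"
    then show "0 \<le> dot (S ! i) (S ! s)"
      using condC_dot_01[OF assms(1), of i s] assms(3) by auto
  qed
  have "(\<Sum>i\<in>{..<length S} - {s}. dot (S ! i) (S ! s)) = 0"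
    using assms(2) unfolding isolated_def degree_def .
  then have "\<forall>i\<in>{..<length S} - {s}. dot (S ! i) (S ! s) = 0"
    using sum_nonneg_eq_0_iff[of "{..<length S} - {s}" "\<lambda>i. dot (S ! i) (S ! s)"] nonneg by auto
  then show ?thesis using assms(4,5) by simp
qed

text \<open>Coordinate description of a contraction S \<searrow> S' removing v_s:
  all entries lie in {-1, 0, 1}, the column h is supported exactly on the rows s and t,
  and S' is S with row s and column h deleted (only row t is changed, and only at h).\<close>
locale contraction_layout =
  fixes S S' :: "int list list" and s h t m :: nat
  assumes len_S: "length S = Suc m"
    and h_le: "h \<le> m" and s_le: "s \<le> m" and t_le: "t \<le> m" and s_ne_t: "s \<noteq> t"
    and len_row: "\<And>j. j < Suc m \<Longrightarrow> length (S ! j) = Suc m"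
    and condC_S: "condC S"
    and entry_bound: "\<And>j c. j < Suc m \<Longrightarrow> c < Suc m \<Longrightarrow> \<bar>S ! j ! c\<bar> \<le> 1"
    and column_h: "\<And>j. j < Suc m \<Longrightarrow> S ! j ! h \<noteq> 0 \<longleftrightarrow> j = s \<or> j = t"
    and len_S': "length S' = m"
    and len_row': "\<And>j. j < m \<Longrightarrow> length (S' ! j) = m"
    and entry': "\<And>j c. j < m \<Longrightarrow> c < m \<Longrightarrow> S' ! j ! c = S ! shift s j ! shift h c"

lemma contraction_by_layout:
  assumes "contraction_by S S' s"
  obtains h t m where "contraction_layout S S' s h t m"
proof -
  from assms obtain h t where ht: "inD (length S) S" "condC S"
     "\<forall>v\<in>set S. \<forall>x\<in>set v. \<bar>x\<bar> \<le> 1" "h < length S" "s < length S" "t < length S" "s \<noteq> t"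
     "Eset S h = {s, t}" "S' = contracted S s t h"
    unfolding contraction_by_def Let_def by blast
  obtain m where m: "length S = Suc m" using ht(5) by (cases "length S") auto
  have len: "\<And>j. j < Suc m \<Longrightarrow> length (S ! j) = Suc m"
    using ht(1) m unfolding inD_def by auto
  have bound: "\<bar>S ! j ! c\<bar> \<le> 1" if "j < Suc m" "c < Suc m" for j c
    using ht(3) that len m by (metis nth_mem)
  have col: "S ! j ! h \<noteq> 0 \<longleftrightarrow> j = s \<or> j = t" if j: "j < Suc m" for j
  proof -
    have "j \<in> Eset S h \<longleftrightarrow> S ! j ! h \<noteq> 0"
      unfolding Eset_def using j len ht(4) m unitv_dot[of h "S ! j"] by auto
    then show ?thesis using ht(8) by auto
  qed
  have hst: "h \<le> m" "s \<le> m" "t \<le> m" using ht(4-6) m by auto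
  note shape = contracted_shape[OF m len hst]
  show ?thesis
    by (rule that[of h t m], unfold_locales) (use m len hst ht(2,7,9) bound col shape in auto)
qed

lemma unit_entry: "\<bar>x::int\<bar> \<le> 1 \<Longrightarrow> x \<noteq> 0 \<Longrightarrow> x = 1 \<or> x = -1"
  by auto

lemma abs_mult_le1: "\<bar>a::int\<bar> \<le> 1 \<Longrightarrow> \<bar>b\<bar> \<le> 1 \<Longrightarrow> \<bar>a * b\<bar> \<le> 1"
  by (simp add: abs_mult mult_le_one)

lemma square_pos: "(a::int) \<noteq> 0 \<Longrightarrow> 1 \<le> a * a"
  by (metis int_one_le_iff_zero_less zero_less_mult_iff linorder_neqE_linordered_idom)

lemma rows_01_column_bounded:
  fixes x y z w :: int
  assumes "x = 1 \<or> x = -1" "y = 1 \<or> y = -1" "z = 1 \<or> z = -1" "\<bar>w\<bar> \<le> 1"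
    and "- (x * z + y * w) \<in> {0, 1}"
  shows "\<bar>x * y + z * w\<bar> \<le> 1"
proof -
  have "w = 1 \<or> w = 0 \<or> w = -1" using assms(4) by auto
  then show ?thesis using assms(1-3,5) by (elim disjE) auto
qed

lemma sum_supported:
  fixes f :: "nat \<Rightarrow> int"
  assumes "A \<subseteq> {..<N}" "\<And>k. k < N \<Longrightarrow> k \<notin> A \<Longrightarrow> f k = 0"
  shows "(\<Sum>k<N. f k) = sum f A"
  using assms by (intro sum.mono_neutral_right finite_subset[of A "{..<N}"]) auto

lemma sum_two:
  fixes f :: "nat \<Rightarrow> int"
  assumes "s < N" "t < N" "s \<noteq> t" "\<And>k. k < N \<Longrightarrow> k \<noteq> s \<Longrightarrow> k \<noteq> t \<Longrightarrow> f k = 0"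
  shows "(\<Sum>k<N. f k) = f s + f t"
  using sum_supported[of "{s, t}" N f] assms by auto

definition col_ip :: "int list list \<Rightarrow> nat \<Rightarrow> nat \<Rightarrow> int" where
  "col_ip S c d = (\<Sum>j<length S. S ! j ! c * S ! j ! d)"

definition col_admissible :: "int list list \<Rightarrow> bool" where
  "col_admissible S \<longleftrightarrow>
     (\<forall>c<length S. \<forall>d<length S. c \<noteq> d \<longrightarrow> \<bar>col_ip S c d\<bar> \<le> 1) \<and>
     (\<forall>c<length S. 2 \<le> col_ip S c c)"

lemma col_ip_sym: "col_ip S c d = col_ip S d c"
  by (simp add: col_ip_def mult.commute)

text \<open>The total squared length of the rows equals that of the columns; this links the
  invariant I to the column norms.\<close>
lemma sum_norms_col_ip:
  assumes "\<And>j. j < length S \<Longrightarrow> length (S ! j) = length S"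
  shows "(\<Sum>j<length S. - dot (S ! j) (S ! j)) = (\<Sum>c<length S. col_ip S c c)"
proof -
  have "(\<Sum>j<length S. - dot (S ! j) (S ! j)) = (\<Sum>j<length S. \<Sum>c<length S. S ! j ! c * S ! j ! c)"
    using assms by (intro sum.cong) (auto simp: dot_def)
  also have "\<dots> = (\<Sum>c<length S. \<Sum>j<length S. S ! j ! c * S ! j ! c)" by (rule sum.swap)
  finally show ?thesis by (simp add: col_ip_def)
qed

lemma Iinv_sum_norms: "Iinv S = (\<Sum>j<length S. - dot (S ! j) (S ! j)) - 3 * int (length S)"
  by (simp add: Iinv_def sum_subtractf)

context contraction_layout
begin

text \<open>The contracted column h consists of two entries \<plusminus>1, so it has squared length 2 and the
  other columns of S are those of S' extended by the entry of the removed row s.\<close>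
lemma idx_lt: "h < Suc m" "s < Suc m" "t < Suc m"
  using h_le s_le t_le by simp_all

lemma column_h_units: "S ! s ! h = 1 \<or> S ! s ! h = -1" "S ! t ! h = 1 \<or> S ! t ! h = -1"
  using unit_entry entry_bound column_h idx_lt by blast+

lemma col_ip_h: "D < Suc m \<Longrightarrow> col_ip S h D = S ! s ! h * S ! s ! D + S ! t ! h * S ! t ! D"
  unfolding col_ip_def len_S by (rule sum_two) (use idx_lt s_ne_t column_h in auto)

lemma col_ip_hh: "col_ip S h h = 2"
  using col_ip_h[OF idx_lt(1)] column_h_units by auto

lemma col_ip_shift:
  assumes "c < m" "d < m"
  shows "col_ip S (shift h c) (shift h d) = S ! s ! shift h c * S ! s ! shift h d + col_ip S' c d"
proof -
  have "col_ip S (shift h c) (shift h d) = S ! s ! shift h c * S ! s ! shift h d +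
     (\<Sum>j<m. S ! shift s j ! shift h c * S ! shift s j ! shift h d)"
    unfolding col_ip_def len_S by (rule sum_shift[OF s_le])
  also have "(\<Sum>j<m. S ! shift s j ! shift h c * S ! shift s j ! shift h d) = col_ip S' c d"
    unfolding col_ip_def len_S' using entry' assms by (intro sum.cong) auto
  finally show ?thesis .
qed

definition rest_norm :: int where
  "rest_norm = (\<Sum>c<m. S ! s ! shift h c * S ! s ! shift h c)"

text \<open>Comparing column norms: I(S) = I(S') + rest_norm - 1, so an expansion preserving I
  removes a vector of the form \<plusminus>e_h \<plusminus>e_c.\<close>
lemma Iinv_expansion: "Iinv S = Iinv S' + rest_norm - 1"
proof -
  have "(\<Sum>j<length S. - dot (S ! j) (S ! j)) = (\<Sum>C<Suc m. col_ip S C C)"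
    using sum_norms_col_ip[of S] len_S len_row by simp
  also have "\<dots> = col_ip S h h + (\<Sum>c<m. col_ip S (shift h c) (shift h c))"
    by (rule sum_shift[OF h_le])
  also have "\<dots> = 2 + rest_norm + (\<Sum>c<m. col_ip S' c c)"
    by (simp add: col_ip_hh col_ip_shift rest_norm_def sum.distrib)
  also have "(\<Sum>c<m. col_ip S' c c) = (\<Sum>j<length S'. - dot (S' ! j) (S' ! j))"
    using sum_norms_col_ip[of S'] len_S' len_row' by simp
  finally show ?thesis using len_S len_S' by (simp add: Iinv_sum_norms)
qed

lemma rest_support_single:
  assumes "rest_norm = 1" "c < m" "d < m" "c \<noteq> d"
  shows "S ! s ! shift h c * S ! s ! shift h d = 0"
proof (rule ccontr)
  assume "S ! s ! shift h c * S ! s ! shift h d \<noteq> 0"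
  then have "2 \<le> (\<Sum>k\<in>{c, d}. S ! s ! shift h k * S ! s ! shift h k)"
    using assms(4) square_pos[of "S ! s ! shift h c"] square_pos[of "S ! s ! shift h d"] by simp
  also have "\<dots> \<le> rest_norm"
    unfolding rest_norm_def using assms(2,3) by (intro sum_mono2) auto
  finally show False using assms(1) by simp
qed

text \<open>Column h has small inner product with any other column D: the only possibly nonzero
  terms come from rows s and t, and (C) for the pair v_s, v_t rules out the value \<plusminus>2.\<close>
lemma col_ip_h_bound:
  assumes "rest_norm = 1" "D < Suc m" "D \<noteq> h"
  shows "\<bar>col_ip S h D\<bar> \<le> 1"
proof (cases "S ! s ! D = 0")
  case True
  then show ?thesis
    using col_ip_h[OF assms(2)] entry_bound[OF idx_lt(3)] entry_bound[OF idx_lt(3) assms(2)]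
      idx_lt assms(2) by (simp add: abs_mult_le1)
next
  case False
  obtain d where d: "d < m" "D = shift h d" using shift_cases[OF assms(2,3) h_le] .
  have zero: "S ! s ! k * S ! t ! k = 0" if k: "k < Suc m" "k \<noteq> h" "k \<noteq> D" for k
  proof -
    obtain c where c: "c < m" "k = shift h c" using shift_cases[OF k(1,2) h_le] .
    then have "c \<noteq> d" using d k(3) by auto
    then show ?thesis using rest_support_single[OF assms(1) c(1) d(1)] False c d by simp
  qed
  have "dot (S ! s) (S ! t) = - (S ! s ! h * S ! t ! h + S ! s ! D * S ! t ! D)"
    unfolding dot_def len_row[OF idx_lt(2)]
    by (subst sum_two[of h _ D]) (use idx_lt assms(2,3) zero in auto)
  moreover have "dot (S ! s) (S ! t) \<in> {0, 1}"
    using condC_dot_01[OF condC_S] idx_lt s_ne_t len_S by simp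
  ultimately have "\<bar>S ! s ! h * S ! s ! D + S ! t ! h * S ! t ! D\<bar> \<le> 1"
    using rows_01_column_bounded column_h_units unit_entry[OF entry_bound[OF idx_lt(2) assms(2)] False]
      entry_bound[OF idx_lt(3) assms(2)] by metis
  then show ?thesis using col_ip_h[OF assms(2)] by simp
qed

lemma admissible_lift:
  assumes "rest_norm = 1" "col_admissible S'"
  shows "col_admissible S"
  unfolding col_admissible_def len_S
proof (intro conjI allI impI)
  fix C assume C: "C < Suc m"
  show "2 \<le> col_ip S C C"
  proof (cases "C = h")
    case False
    obtain c where c: "c < m" "C = shift h c" using shift_cases[OF C False h_le] .
    have "2 \<le> col_ip S' c c" using assms(2) c(1) len_S' unfolding col_admissible_def by blast
    moreover have "0 \<le> S ! s ! C * S ! s ! C" by simp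
    ultimately show ?thesis unfolding c(2) col_ip_shift[OF c(1) c(1)] by linarith
  qed (simp add: col_ip_hh)
next
  fix C D assume CD: "C < Suc m" "D < Suc m" "C \<noteq> D"
  show "\<bar>col_ip S C D\<bar> \<le> 1"
  proof (cases "C = h \<or> D = h")
    case True
    then show ?thesis by (metis CD col_ip_h_bound[OF assms(1)] col_ip_sym)
  next
    case False
    obtain c where c: "c < m" "C = shift h c" using shift_cases[OF CD(1) _ h_le] False by blast
    obtain d where d: "d < m" "D = shift h d" using shift_cases[OF CD(2) _ h_le] False by blast
    have "c \<noteq> d" using c d CD(3) by auto
    then have "\<bar>col_ip S' c d\<bar> \<le> 1" using assms(2) c(1) d(1) len_S' unfolding col_admissible_def by blast
    then show ?thesis
      using col_ip_shift[OF c(1) d(1)] rest_support_single[OF assms(1) c(1) d(1) \<open>c \<noteq> d\<close>] c d by simp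
  qed
qed

end

lemma sum_squares_card:
  assumes "\<And>k. k < N \<Longrightarrow> \<bar>v ! k\<bar> \<le> (1::int)"
  shows "(\<Sum>k<N. v ! k * v ! k) = int (card {k. k < N \<and> v ! k \<noteq> 0})"
proof -
  have "(\<Sum>k<N. v ! k * v ! k) = (\<Sum>k<N. if v ! k \<noteq> 0 then 1 else 0)"
    using assms unit_entry by (intro sum.cong) fastforce+
  also have "\<dots> = int (card {k \<in> {..<N}. v ! k \<noteq> 0})"
    by (simp add: sum.If_cases Int_def)
  also have "{k \<in> {..<N}. v ! k \<noteq> 0} = {k. k < N \<and> v ! k \<noteq> 0}" by auto
  finally show ?thesis .
qed

lemma unit_orthogonal_pair:
  fixes xa xb ya yb :: int
  assumes "xa = 1 \<or> xa = -1" "xb = 1 \<or> xb = -1" "\<bar>ya\<bar> \<le> 1" "\<bar>yb\<bar> \<le> 1"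
    and "xa * ya + xb * yb = 0"
  shows "ya * yb = - (xa * xb) * (yb * yb)"
proof -
  have "ya = 1 \<or> ya = 0 \<or> ya = -1" "yb = 1 \<or> yb = 0 \<or> yb = -1" using assms(3,4) by auto
  then show ?thesis using assms(1,2,5) by (elim disjE) auto
qed

lemma unit_orthogonal_triple:
  fixes xa xb xh zh ya yb :: int
  assumes "xa = 1 \<or> xa = -1" "xb = 1 \<or> xb = -1" "xh = 1 \<or> xh = -1" "zh = 1 \<or> zh = -1"
    and "\<bar>ya\<bar> \<le> 1" "\<bar>yb\<bar> \<le> 1" "xh * zh + xa * ya + xb * yb = 0"
  shows "ya = 0 \<or> yb = 0"
proof -
  have "ya = 1 \<or> ya = 0 \<or> ya = -1" "yb = 1 \<or> yb = 0 \<or> yb = -1" using assms(5,6) by auto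
  then show ?thesis using assms(1-4,7) by (elim disjE) auto
qed

context contraction_layout
begin

lemma norm3_support:
  assumes "dot (S ! s) (S ! s) = -3"
  obtains a b where "a \<noteq> b" "a < Suc m" "b < Suc m" "a \<noteq> h" "b \<noteq> h"
    "S ! s ! a = 1 \<or> S ! s ! a = -1" "S ! s ! b = 1 \<or> S ! s ! b = -1"
    "\<And>k. k < Suc m \<Longrightarrow> k \<noteq> h \<Longrightarrow> k \<noteq> a \<Longrightarrow> k \<noteq> b \<Longrightarrow> S ! s ! k = 0"
proof -
  define K where "K = {k. k < Suc m \<and> S ! s ! k \<noteq> 0}"
  have "- dot (S ! s) (S ! s) = int (card K)"
    unfolding neg_dot_self K_def len_row[OF idx_lt(2)]
    by (rule sum_squares_card) (use entry_bound idx_lt in auto)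
  then have "card K = 3" using assms by simp
  moreover have "h \<in> K" "finite K" using column_h idx_lt unfolding K_def by auto
  ultimately have "card (K - {h}) = 2" by simp
  then obtain a b where ab: "K - {h} = {a, b}" "a \<noteq> b" by (meson card_2_iff)
  show ?thesis
  proof (rule that[of a b])
    show "S ! s ! a = 1 \<or> S ! s ! a = -1" "S ! s ! b = 1 \<or> S ! s ! b = -1"
      using ab unit_entry entry_bound idx_lt unfolding K_def by blast+
  qed (use ab in \<open>auto simp: K_def\<close>)
qed

lemma dot_s_support:
  assumes "a \<noteq> b" "a < Suc m" "b < Suc m" "a \<noteq> h" "b \<noteq> h"
    and "\<And>k. k < Suc m \<Longrightarrow> k \<noteq> h \<Longrightarrow> k \<noteq> a \<Longrightarrow> k \<noteq> b \<Longrightarrow> S ! s ! k = 0"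
    and "r < Suc m"
  shows "dot (S ! s) (S ! r) = - (S ! s ! h * S ! r ! h + S ! s ! a * S ! r ! a + S ! s ! b * S ! r ! b)"
proof -
  have "(\<Sum>k<Suc m. S ! s ! k * S ! r ! k) = (\<Sum>k\<in>{h, a, b}. S ! s ! k * S ! r ! k)"
    by (rule sum_supported) (use idx_lt assms in auto)
  also have "\<dots> = S ! s ! h * S ! r ! h + S ! s ! a * S ! r ! a + S ! s ! b * S ! r ! b"
    using assms(1,4,5) by (simp add: add.assoc)
  finally show ?thesis unfolding dot_def len_row[OF idx_lt(2)] by simp
qed

lemma isolated_s_orthogonal:
  assumes "isolated S s" "r < Suc m" "r \<noteq> s"
  shows "dot (S ! s) (S ! r) = 0"
  using isolated_orthogonal[OF condC_S assms(1)] dot_sym[of "S ! r" "S ! s"] assms(2,3)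
    idx_lt len_S len_row by simp

text \<open>Two columns of S that are proportional (up to sign) on all rows except the removed one
  give two columns of S' whose inner product equals a column norm -- impossible if S' is admissible.\<close>
lemma proportional_columns_absurd:
  assumes "col_admissible S'" "a \<noteq> b" "a < Suc m" "b < Suc m" "a \<noteq> h" "b \<noteq> h" "\<bar>\<kappa>\<bar> = 1"
    and "\<And>r. r < Suc m \<Longrightarrow> r \<noteq> s \<Longrightarrow> S ! r ! a * S ! r ! b = \<kappa> * (S ! r ! b * S ! r ! b)"
  shows False
proof -
  obtain a0 where a0: "a0 < m" "a = shift h a0" using shift_cases[OF assms(3,5) h_le] .
  obtain b0 where b0: "b0 < m" "b = shift h b0" using shift_cases[OF assms(4,6) h_le] .
  have "a0 \<noteq> b0" using a0 b0 assms(2) by auto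
  have "col_ip S' a0 b0 = (\<Sum>j<m. S ! shift s j ! a * S ! shift s j ! b)"
    unfolding col_ip_def len_S' using entry' a0 b0 by (intro sum.cong) auto
  also have "\<dots> = (\<Sum>j<m. \<kappa> * (S ! shift s j ! b * S ! shift s j ! b))"
    using assms(8) s_le by (intro sum.cong) (auto simp: shift_lt shift_ne)
  also have "\<dots> = \<kappa> * col_ip S' b0 b0"
    unfolding col_ip_def len_S' using entry' b0 by (simp add: sum_distrib_left)
  finally have "\<bar>col_ip S' a0 b0\<bar> = \<bar>col_ip S' b0 b0\<bar>" using assms(7) by (simp add: abs_mult)
  moreover have "2 \<le> col_ip S' b0 b0" "\<bar>col_ip S' a0 b0\<bar> \<le> 1"
    using assms(1) a0 b0 \<open>a0 \<noteq> b0\<close> len_S' unfolding col_admissible_def by blast+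
  ultimately show False by simp
qed

text \<open>If moreover v_t vanishes at b, orthogonality to v_s makes the columns a and b
  proportional on all rows r \<noteq> s: for r \<noteq> t because v_r vanishes at h, for r = t trivially.\<close>
lemma isolated_support_absurd:
  assumes adm: "col_admissible S'" and iso: "isolated S s"
    and ab: "a \<noteq> b" "a < Suc m" "b < Suc m" "a \<noteq> h" "b \<noteq> h"
    and units: "S ! s ! a = 1 \<or> S ! s ! a = -1" "S ! s ! b = 1 \<or> S ! s ! b = -1"
    and supp: "\<And>k. k < Suc m \<Longrightarrow> k \<noteq> h \<Longrightarrow> k \<noteq> a \<Longrightarrow> k \<noteq> b \<Longrightarrow> S ! s ! k = 0"
    and t_b: "S ! t ! b = 0"
  shows False
proof (rule proportional_columns_absurd[OF adm ab])
  show "\<bar>- (S ! s ! a * S ! s ! b)\<bar> = 1" using units by auto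
  fix r assume r: "r < Suc m" "r \<noteq> s"
  show "S ! r ! a * S ! r ! b = - (S ! s ! a * S ! s ! b) * (S ! r ! b * S ! r ! b)"
  proof (cases "r = t")
    case False
    then have "S ! r ! h = 0" using column_h r by auto
    then have "S ! s ! a * S ! r ! a + S ! s ! b * S ! r ! b = 0"
      using isolated_s_orthogonal[OF iso r] dot_s_support[OF ab supp r(1)] by simp
    then show ?thesis
      using unit_orthogonal_pair[OF units entry_bound[OF r(1) ab(2)] entry_bound[OF r(1) ab(3)]]
      by simp
  qed (simp add: t_b)
qed

text \<open>Orthogonality of v_s and v_t forces v_t to vanish at a or at b, so no isolated
  (-3)-vector can be removed from a configuration over a column-admissible S'.\<close>
lemma no_isolated_norm3:
  assumes "col_admissible S'" "isolated S s" "dot (S ! s) (S ! s) = -3"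
  shows False
proof -
  obtain a b where ab: "a \<noteq> b" "a < Suc m" "b < Suc m" "a \<noteq> h" "b \<noteq> h"
    and units: "S ! s ! a = 1 \<or> S ! s ! a = -1" "S ! s ! b = 1 \<or> S ! s ! b = -1"
    and supp: "\<And>k. k < Suc m \<Longrightarrow> k \<noteq> h \<Longrightarrow> k \<noteq> a \<Longrightarrow> k \<noteq> b \<Longrightarrow> S ! s ! k = 0"
    using norm3_support[OF assms(3)] by blast
  have "S ! s ! h * S ! t ! h + S ! s ! a * S ! t ! a + S ! s ! b * S ! t ! b = 0"
    using isolated_s_orthogonal[OF assms(2) idx_lt(3)] dot_s_support[OF ab supp idx_lt(3)] s_ne_t
    by simp
  then have "S ! t ! a = 0 \<or> S ! t ! b = 0"
    using unit_orthogonal_triple[OF units column_h_units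
        entry_bound[OF idx_lt(3) ab(2)] entry_bound[OF idx_lt(3) ab(3)]] by simp
  moreover have "S ! t ! b \<noteq> 0"
    using isolated_support_absurd[OF assms(1,2) ab units supp] by blast
  moreover have "S ! t ! a \<noteq> 0"
    using isolated_support_absurd[OF assms(1,2) ab(1)[symmetric] ab(3,2,5,4) units(2,1)] supp
    by metis
  ultimately show False by blast
qed

end

lemma abs_le1_of_square_le3: "(x::int) * x \<le> 3 \<Longrightarrow> \<bar>x\<bar> \<le> 1"
proof (rule ccontr)
  assume "x * x \<le> 3" "\<not> \<bar>x\<bar> \<le> 1"
  then have "2 * 2 \<le> \<bar>x\<bar> * \<bar>x\<bar>" by (intro mult_mono) auto
  then show False using \<open>x * x \<le> 3\<close> by (simp add: abs_mult_self_eq)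
qed

lemma no_equal_products:
  fixes a1 b1 e1 a2 b2 e2 :: int
  assumes "\<bar>a1\<bar> \<le> 1" "\<bar>b1\<bar> \<le> 1" "\<bar>e1\<bar> \<le> 1" "\<bar>a2\<bar> \<le> 1" "\<bar>b2\<bar> \<le> 1" "\<bar>e2\<bar> \<le> 1"
    and "a1 * b1 = a2 * b2" "a1 * b1 \<noteq> 0"
    and "(a1 * a1 + b1 * b1 + e1 * e1) + (a2 * a2 + b2 * b2 + e2 * e2) \<le> 5"
    and "- (a1 * a2 + b1 * b2 + e1 * e2) \<in> {0, 1}"
  shows False
proof -
  have "a1 \<noteq> 0" "b1 \<noteq> 0" "a2 \<noteq> 0" "b2 \<noteq> 0" using assms(7,8) by auto
  then have "a1 = 1 \<or> a1 = -1" "b1 = 1 \<or> b1 = -1" "a2 = 1 \<or> a2 = -1" "b2 = 1 \<or> b2 = -1"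
    using assms(1,2,4,5) by auto
  moreover have "e1 = 1 \<or> e1 = 0 \<or> e1 = -1" "e2 = 1 \<or> e2 = 0 \<or> e2 = -1" using assms(3,6) by auto
  ultimately show False using assms(7,9,10) by (elim disjE) auto
qed

lemma sum_three:
  fixes g :: "nat \<Rightarrow> int"
  assumes "c < 3" "d < 3" "e < 3" "c \<noteq> d" "c \<noteq> e" "d \<noteq> e"
  shows "(\<Sum>k<3. g k) = g c + g d + g e"
proof -
  have "{..<3::nat} = {c, d, e}" using assms by auto
  then show ?thesis using assms by (simp add: add.assoc)
qed

lemma third_index:
  assumes "c < 3" "d < (3::nat)" "c \<noteq> d"
  obtains e where "e < 3" "e \<noteq> c" "e \<noteq> d"
proof -
  have "3 - c - d < 3 \<and> 3 - c - d \<noteq> c \<and> 3 - c - d \<noteq> d" using assms by arith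
  then show ?thesis using that by blast
qed

lemma col_ip_dim3: "length S = 3 \<Longrightarrow>
    col_ip S c d = S ! 0 ! c * S ! 0 ! d + S ! 1 ! c * S ! 1 ! d + S ! 2 ! c * S ! 2 ! d"
  unfolding col_ip_def by (simp add: sum_three[of 0 1 2])

text \<open>In dimension 3 with \<open>I(S) = -2\<close> the squared norms are at least 2 and add up to 7,
  so any two of them add up to at most 5 and all coordinates lie in \<open>{-1, 0, 1}\<close>.\<close>
lemma dim3_norms:
  assumes "inD 3 S" "condC S" "Iinv S = -2"
  shows dim3_pair_norms: "\<And>i j. i < 3 \<Longrightarrow> j < 3 \<Longrightarrow> i \<noteq> j \<Longrightarrow>
      - dot (S ! i) (S ! i) - dot (S ! j) (S ! j) \<le> 5"
    and dim3_entry_bound: "\<And>j c. j < 3 \<Longrightarrow> c < 3 \<Longrightarrow> \<bar>S ! j ! c\<bar> \<le> 1"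
proof -
  have L: "length S = 3" "\<And>j. j < 3 \<Longrightarrow> length (S ! j) = 3" using assms(1) unfolding inD_def by auto
  define N where "N j = - dot (S ! j) (S ! j)" for j
  have N2: "2 \<le> N j" if "j < 3" for j using assms(2) L that unfolding condC_def N_def by fastforce
  have N7: "(\<Sum>j<3. N j) = 7" using assms(3) L unfolding Iinv_sum_norms N_def by simp
  have pair: "N i + N j \<le> 5" if ij: "i < 3" "j < 3" "i \<noteq> j" for i j
  proof -
    obtain k where k: "k < 3" "k \<noteq> i" "k \<noteq> j" using third_index[OF ij] .
    have "(\<Sum>j<3. N j) = N i + N j + N k" by (rule sum_three) (use ij k in auto)
    then show ?thesis using N7 N2[OF k(1)] by simp
  qed
  then show "\<And>i j. i < 3 \<Longrightarrow> j < 3 \<Longrightarrow> i \<noteq> j \<Longrightarrow> - dot (S ! i) (S ! i) - dot (S ! j) (S ! j) \<le> 5"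
    unfolding N_def by simp
  fix j c :: nat assume jc: "j < 3" "c < 3"
  define i :: nat where "i = (if j = 0 then 1 else 0)"
  have i: "i < 3" "i \<noteq> j" unfolding i_def by auto
  have "S ! j ! c * S ! j ! c \<le> (\<Sum>k<3. S ! j ! k * S ! j ! k)"
    using member_le_sum[of c "{..<3}" "\<lambda>k. S ! j ! k * S ! j ! k"] jc(2) by simp
  also have "\<dots> = N j" unfolding N_def neg_dot_self L(2)[OF jc(1)] ..
  also have "\<dots> \<le> 3" using pair[OF i(1) jc(1) i(2)] N2[OF i(1)] by simp
  finally show "\<bar>S ! j ! c\<bar> \<le> 1" by (rule abs_le1_of_square_le3)
qed

lemma three_products_bound:
  fixes p0 p1 p2 :: int
  assumes "\<bar>p0\<bar> \<le> 1" "\<bar>p1\<bar> \<le> 1" "\<bar>p2\<bar> \<le> 1"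
    and "\<not> (p0 = p1 \<and> p0 \<noteq> 0)" "\<not> (p0 = p2 \<and> p0 \<noteq> 0)" "\<not> (p1 = p2 \<and> p1 \<noteq> 0)"
  shows "\<bar>p0 + p1 + p2\<bar> \<le> 1"
  using assms by auto

text \<open>Two distinct rows of a 3-dimensional configuration never have the same nonzero
  product on the same pair of coordinates: otherwise their inner product would leave \<open>{0, 1}\<close>.\<close>
lemma dim3_distinct_products:
  assumes S: "inD 3 S" "condC S" "Iinv S = -2"
    and ij: "i < 3" "j < 3" "i \<noteq> j" and cd: "c < 3" "d < 3" "c \<noteq> d"
  shows "\<not> (S ! i ! c * S ! i ! d = S ! j ! c * S ! j ! d \<and> S ! i ! c * S ! i ! d \<noteq> 0)"
proof
  assume eq: "S ! i ! c * S ! i ! d = S ! j ! c * S ! j ! d \<and> S ! i ! c * S ! i ! d \<noteq> 0"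
  have L: "length S = 3" "\<And>j. j < 3 \<Longrightarrow> length (S ! j) = 3" using S(1) unfolding inD_def by auto
  obtain e where e: "e < 3" "e \<noteq> c" "e \<noteq> d" using third_index[OF cd] .
  have s3: "(\<Sum>k<3. g k) = g c + g d + g e" for g :: "nat \<Rightarrow> int"
    by (rule sum_three) (use cd e in auto)
  have "dot (S ! i) (S ! j) \<in> {0, 1}" using condC_dot_01[OF S(2)] ij L by simp
  then have dot01: "- (S ! i ! c * S ! j ! c + S ! i ! d * S ! j ! d + S ! i ! e * S ! j ! e) \<in> {0, 1}"
    unfolding dot_def using L ij s3 by simp
  have norms: "(S ! i ! c * S ! i ! c + S ! i ! d * S ! i ! d + S ! i ! e * S ! i ! e) +
      (S ! j ! c * S ! j ! c + S ! j ! d * S ! j ! d + S ! j ! e * S ! j ! e) \<le> 5"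
  proof -
    have norm: "- dot (S ! r) (S ! r) = S ! r ! c * S ! r ! c + S ! r ! d * S ! r ! d + S ! r ! e * S ! r ! e"
      if "r < 3" for r
      unfolding neg_dot_self L(2)[OF that] by (rule s3)
    show ?thesis using dim3_pair_norms[OF S ij] norm[OF ij(1)] norm[OF ij(2)] by linarith
  qed
  note bound = dim3_entry_bound[OF S]
  show False
    by (rule no_equal_products[OF bound[OF ij(1) cd(1)] bound[OF ij(1) cd(2)] bound[OF ij(1) e(1)]
          bound[OF ij(2) cd(1)] bound[OF ij(2) cd(2)] bound[OF ij(2) e(1)] _ _ norms dot01])
      (use eq in auto)
qed

lemma dim3_col_offdiag:
  assumes S: "inD 3 S" "condC S" "Iinv S = -2" and cd: "c < 3" "d < 3" "c \<noteq> d"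
  shows "\<bar>col_ip S c d\<bar> \<le> 1"
proof -
  have L: "length S = 3" using S(1) unfolding inD_def by simp
  have bound: "\<bar>S ! j ! c * S ! j ! d\<bar> \<le> 1" if "j < 3" for j
    using abs_mult_le1 dim3_entry_bound[OF S] that cd by blast
  note distinct = dim3_distinct_products[OF S _ _ _ cd]
  show ?thesis unfolding col_ip_dim3[OF L]
    by (rule three_products_bound)
      (use bound[of 0] bound[of 1] bound[of 2] distinct[of 0 1] distinct[of 0 2] distinct[of 1 2] in auto)
qed

text \<open>The column norms add up to 7 and are at most 3; a column of norm at most 1 would force
  the other two to be full, and then two rows repeat a nonzero product on them.\<close>
lemma dim3_col_diag:
  assumes S: "inD 3 S" "condC S" "Iinv S = -2" and c: "c < 3"
  shows "2 \<le> col_ip S c c"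
proof (rule ccontr)
  assume small: "\<not> 2 \<le> col_ip S c c"
  have L: "length S = 3" "\<And>j. j < 3 \<Longrightarrow> length (S ! j) = 3" using S(1) unfolding inD_def by auto
  define d :: nat where "d = (if c = 0 then 1 else 0)"
  have d: "d < 3" "d \<noteq> c" unfolding d_def by auto
  obtain e where e: "e < 3" "e \<noteq> c" "e \<noteq> d" using third_index[OF c d(1) d(2)[symmetric]] .
  have "(\<Sum>x<3. col_ip S x x) = 7"
    using sum_norms_col_ip[of S] S(3) L unfolding Iinv_sum_norms by simp
  then have total: "col_ip S c c + col_ip S d d + col_ip S e e = 7"
    using sum_three[of c d e "\<lambda>x. col_ip S x x"] c d e by simp
  have sq01: "0 \<le> S ! j ! x * S ! j ! x \<and> S ! j ! x * S ! j ! x \<le> 1" if "j < 3" "x < 3" for j x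
    using abs_mult_le1[OF dim3_entry_bound[OF S that] dim3_entry_bound[OF S that]] by simp
  have col_le3: "col_ip S x x \<le> 3" if "x < 3" for x
    using col_ip_dim3[OF L(1)] sq01[of 0 x] sq01[of 1 x] sq01[of 2 x] that by simp
  have full: "S ! j ! x \<noteq> 0" if x: "x < 3" "col_ip S x x = 3" and j: "j < 3" for x j
  proof
    assume "S ! j ! x = 0"
    moreover have "j = 0 \<or> j = 1 \<or> j = 2" using j by auto
    ultimately show False
      using x col_ip_dim3[OF L(1), of x x] sq01[of 0 x] sq01[of 1 x] sq01[of 2 x] by auto
  qed
  have "col_ip S d d = 3" "col_ip S e e = 3"
    using col_le3[OF d(1)] col_le3[OF e(1)] small total by simp_all
  define p where "p j = S ! j ! d * S ! j ! e" for j
  have units: "p j = 1 \<or> p j = -1" if "j < 3" for j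
    using unit_entry[OF dim3_entry_bound[OF S that d(1)] full[OF d(1) _ that]]
      unit_entry[OF dim3_entry_bound[OF S that e(1)] full[OF e(1) _ that]] \<open>col_ip S d d = 3\<close>
      \<open>col_ip S e e = 3\<close> unfolding p_def by auto
  have "p 0 = p 1 \<and> p 0 \<noteq> 0 \<or> p 0 = p 2 \<and> p 0 \<noteq> 0 \<or> p 1 = p 2 \<and> p 1 \<noteq> 0"
    using units[of 0] units[of 1] units[of 2] by auto
  moreover have no_repeat: "\<not> (p i = p j \<and> p i \<noteq> 0)" if "i < 3" "j < 3" "i \<noteq> j" for i j
    using dim3_distinct_products[OF S that d(1) e(1) e(3)[symmetric]] unfolding p_def .
  ultimately show False using no_repeat[of 0 1] no_repeat[of 0 2] no_repeat[of 1 2] by auto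
qed

lemma dim3_admissible:
  assumes "inD 3 S" "condC S" "Iinv S = -2"
  shows "col_admissible S"
  using dim3_col_offdiag[OF assms] dim3_col_diag[OF assms] assms(1)
  unfolding col_admissible_def inD_def by simp

lemma expansion_preserves_admissible:
  assumes "contraction_by S S' s" "Iinv S = Iinv S'" "col_admissible S'"
  shows "col_admissible S"
proof -
  obtain h t m where "contraction_layout S S' s h t m" using contraction_by_layout[OF assms(1)] .
  then interpret contraction_layout S S' s h t m .
  have "rest_norm = 1" using Iinv_expansion assms(2) by simp
  then show ?thesis using admissible_lift assms(3) by blast
qed

lemma no_isolated_norm3_expansion:
  assumes "contraction_by S S' s" "isolated S s" "dot (S ! s) (S ! s) = -3" "col_admissible S'"
  shows False
proof -
  obtain h t m where "contraction_layout S S' s h t m" using contraction_by_layout[OF assms(1)] .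
  then interpret contraction_layout S S' s h t m .
  show False using no_isolated_norm3 assms(2-4) by blast
qed

lemma chain_admissible:
  assumes "3 \<le> n"
    and "\<forall>k\<in>{3..n}. inD k (Ss k) \<and> condC (Ss k) \<and> Iinv (Ss k) = -2"
    and "\<forall>k\<in>{3..<n}. expansion (Ss k) (Ss (Suc k))"
  shows "col_admissible (Ss n)"
  using assms
proof (induction n rule: nat_induct_at_least)
  case base
  then show ?case using dim3_admissible by simp
next
  case (Suc n)
  then have "col_admissible (Ss n)" by simp
  moreover have "expansion (Ss n) (Ss (Suc n))" using Suc.prems(2) Suc.hyps by simp
  then obtain s where "contraction_by (Ss (Suc n)) (Ss n) s"
    unfolding expansion_def contraction_def by blast
  moreover have "Iinv (Ss (Suc n)) = Iinv (Ss n)" using Suc.prems(1) Suc.hyps by simp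
  ultimately show ?case using expansion_preserves_admissible by blast
qed

theorem lemma4p6:
  fixes n :: nat and Ss :: "nat \<Rightarrow> int list list"
  assumes "3 \<le> n"
    and "\<forall>k\<in>{3..n}. inD k (Ss k)"
    and "\<forall>k\<in>{3..<n}. expansion (Ss k) (Ss (Suc k))"
    and "\<forall>k\<in>{3..n}. good (Ss k) \<and> nbad (Ss k) = 0 \<and> Iinv (Ss k) = -2 \<and> ncomp (Ss k) = 2"
  shows "\<not> (\<exists>S. inD (n + 1) S \<and> expansion_isolated 3 (Ss n) S)"
proof
  assume "\<exists>S. inD (n + 1) S \<and> expansion_isolated 3 (Ss n) S"
  then obtain S s where S: "contraction_by S (Ss n) s" "isolated S s" "dot (S ! s) (S ! s) = -3"
    unfolding expansion_isolated_def by auto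
  have "col_admissible (Ss n)"
    using chain_admissible[OF assms(1) _ assms(3)] assms(2,4) unfolding good_def by simp
  then show False using no_isolated_norm3_expansion[OF S] by blast
qed

end
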